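(* Let $S\subset\mathcal P$ be finite and let $\Delta$ be a bounded region of $\mathcal L_S$ with $n$ sides, with $P_k$, $D_k$ ($k\in\mathbb{Z}/n\mathbb{Z}$) as in the context. Fix $k$. Let $M$ be the line in $\mathcal P$ through $P_k$ parallel to $\overleftrightarrow{OP_{k+1}}$ (it does not pass through $O$), and for $P\in M$ let $m(P)=\overleftrightarrow{PP_{k+1}}$. Starting from $P=P_k$, move $P$ along $M$ to the right if $D_{k+1}=r$ and to the left if $D_{k+1}=l$, and let $P^*$ be the first position at which $m(P)$ contains a point of $S$ not lying on $\overleftrightarrow{P_kP_{k+1}}$. Let $Q_0=P_{k+1},Q_1,\dots,Q_q$ be the points of $m(P^* )\cap S$, indexed in the order in which they are met when starting at $Q_0$ and moving along $m(P^* )$ in the direction away from $P^*$, wrapping around through infinity to the opposite end of $m(P^* )$ if necessary. Then $P_{k+2}=Q_q$ if $D_k=D_{k+1}$, and $P_{k+2}=Q_1$ if $D_k\neq D_{k+1}$.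
   Context: $\mathcal P=\mathbb{R}^2\setminus\{(0,0)\}$ is the coefficient plane, with origin denoted $O$ (also $O$ denotes the origin of $\mathbb{R}^2$); for $P=(A,B)\in\mathcal P$, $L_P$ is the line $Ax+By=1$ in $\mathbb{R}^2$; $\mathcal L_S=\{L_P\mid P\in S\}$. For $P=(A,B),Q=(A',B')$, $Q$ is to the left of $P$ if $AB'-BA'>0$ and to the right if $AB'-BA'<0$. Moving "to the right" (resp. "left") along a line not through $O$ means moving in the direction of points that are to the right (resp. left) of the current point. For finite $S$, regions of $\mathcal L_S$ are the closures of the connected components of $\mathbb{R}^2\setminus\bigcup_{P\in S}L_P$. For a bounded region $\Delta$ with $n$ sides, $L_k$ ($k\in\mathbb{Z}/n\mathbb{Z}$) are the lines containing the sides of $\Delta$ in clockwise order around $\Delta$, $P_k\in S$ is the point with $L_{P_k}=L_k$, and $D_k\in\{l,r\}$ is the side of $L_k$ on which the origin of $\mathbb{R}^2$ lies for a traveller moving along the side of $\Delta$ on $L_k$ clockwise around $\Delta$ (with $\Delta$ on the traveller's right). *)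

theory Defs
  imports "HOL-Analysis.Analysis"
begin

text \<open>Points of the plane (both the coefficient plane and the plane of the lines)
  are pairs of reals. cross P Q = A B' - B A' for P = (A,B), Q = (A',B').\<close>

definition cross :: "real \<times> real \<Rightarrow> real \<times> real \<Rightarrow> real" where
  "cross P Q = fst P * snd Q - snd P * fst Q"

definition Lline :: "real \<times> real \<Rightarrow> (real \<times> real) set" where
  "Lline P = {x. fst P * fst x + snd P * snd x = 1}"

definition regions :: "(real \<times> real) set \<Rightarrow> (real \<times> real) set set" where
  "regions S = closure ` components (UNIV - (\<Union>P\<in>S. Lline P))"

definition left_of :: "real \<times> real \<Rightarrow> real \<times> real \<Rightarrow> bool" where
  "left_of P Q \<longleftrightarrow> cross P Q > 0"
definition right_of :: "real \<times> real \<Rightarrow> real \<times> real \<Rightarrow> bool" where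
  "right_of P Q \<longleftrightarrow> cross P Q < 0"

definition line_thru :: "real \<times> real \<Rightarrow> real \<times> real \<Rightarrow> (real \<times> real) set" where
  "line_thru a b = {a + t *\<^sub>R (b - a) | t. True}"

datatype side = Lft | Rgt

text \<open>Side of the (directed) line from a to b on which the origin lies, for a
  traveller moving from a to b.\<close>
definition origin_side :: "real \<times> real \<Rightarrow> real \<times> real \<Rightarrow> side" where
  "origin_side a b = (if cross (b - a) (0 - a) > 0 then Lft else Rgt)"

text \<open>Cyclic order on the line through Q0 (with P on it, P \<noteq> Q0):
  cyc_before P Q0 Q Q' means that, starting at Q0 and moving along the line in the
  direction away from P (wrapping around through infinity), Q is met strictly
  before Q'.\<close>
definition cyc_before ::
  "real \<times> real \<Rightarrow> real \<times> real \<Rightarrow> real \<times> real \<Rightarrow> real \<times> real \<Rightarrow> bool" where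
  "cyc_before P Q0 Q Q' \<longleftrightarrow>
     (\<exists>a b. Q = Q0 + a *\<^sub>R (Q0 - P) \<and> Q' = Q0 + b *\<^sub>R (Q0 - P) \<and> a \<noteq> 0 \<and> b \<noteq> 0 \<and>
        ((0 < a \<and> b < 0) \<or> (0 < a * b \<and> a < b)))"

end

theory Submission
  imports Defs
begin

text \<open>
  Everything is read through the duality x \<in> L_Q \<longleftrightarrow> inner Q x = 1: the points Q whose
  line passes through a fixed point y form the line {Q. inner Q y = 1} of the coefficient plane.
  Hence, as P moves along M from P_k, the line m(P) through P_{k+1} is dual to a point running
  along the side of \<Delta> from the vertex v_{k+1} towards v_{k+2}. Since \<Delta> is a region, no line
  of the arrangement meets that side except at its ends, so the first hit occurs exactly when
  m(P^*) is the dual of v_{k+2}; it contains P_{k+2}.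

  Every Q \<in> S on m(P^*) has v_{k+1} and v_{k+3} on the same side of L_Q. Writing
  Q = P_{k+1} + a (P_{k+1} - P^*), this says that 1/a - 1/a_{k+2} has a fixed sign, namely
  that of cross v_k v_{k+1} * cross v_{k+1} v_{k+2}, which is positive iff D_k = D_{k+1}.
  The cyclic order along m(P^*) is the order of -1/a, so P_{k+2} comes last or first.
  Only the incidences, the strict turning at v_{k+1} and v_{k+2}, the membership of the vertices
  in \<Delta> and the fact that \<Delta> is a region are needed.
\<close>

lemma Lline_iff_inner: "x \<in> Lline P \<longleftrightarrow> inner P x = 1"
  by (cases P, cases x) (simp add: Lline_def)

lemma origin_side_eq: "origin_side a b = (if 0 < cross a b then Lft else Rgt)"
  by (simp add: origin_side_def cross_def algebra_simps)

lemma inner_minus_one_mult_cross: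
  assumes "inner P a = 1" "inner P b = 1"
  shows "(inner P x - 1) * cross a b = cross (x - a) (b - a)"
proof -
  obtain p q a1 a2 b1 b2 x1 x2 where
    coords: "P = (p, q)" "a = (a1, a2)" "b = (b1, b2)" "x = (x1, x2)"
    by (metis surj_pair)
  show ?thesis
    using assms unfolding coords by (simp add: cross_def) algebra
qed

lemma inner_diff_eq_cross:
  assumes "inner Q b = 1" "inner Q c = 1"
  shows "inner P (c - b) = - cross b c * cross P Q"
proof -
  obtain p q p' q' b1 b2 c1 c2 where
    coords: "P = (p, q)" "Q = (p', q')" "b = (b1, b2)" "c = (c1, c2)"
    by (metis surj_pair)
  show ?thesis
    using assms unfolding coords by (simp add: cross_def) algebra
qed

lemma turn_eq_cross_duals:
  assumes "inner P a = 1" "inner P b = 1" "inner Q b = 1" "inner Q c = 1"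
  shows "cross (b - a) (c - b) = cross P Q * cross a b * cross b c"
proof -
  have "(inner P c - 1) * cross a b = cross (c - a) (b - a)"
    using assms(1,2) by (rule inner_minus_one_mult_cross)
  moreover have "inner P c - 1 = - cross b c * cross P Q"
    using inner_diff_eq_cross[OF assms(3,4), of P] assms(2) by (simp add: inner_diff_right)
  ultimately show ?thesis
    by (simp add: cross_def algebra_simps)
qed

lemma cross_eq_0_imp_multiple:
  assumes "w \<noteq> 0" "cross z w = 0"
  shows "z = (inner z w / inner w w) *\<^sub>R w"
proof -
  obtain w1 w2 z1 z2 where wz: "w = (w1, w2)" "z = (z1, z2)"
    by (metis surj_pair)
  have "inner w w \<noteq> 0"
    using assms(1) by simp
  then have "w1 * w1 + w2 * w2 \<noteq> 0"
    by (simp add: wz)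
  moreover have "z1 * w2 = z2 * w1"
    using assms(2) by (simp add: wz cross_def)
  ultimately show ?thesis
    by (simp add: wz field_simps)
qed

lemma line_thru_eq_dual_line:
  assumes "X \<noteq> Y" "inner X y = 1" "inner Y y = 1"
  shows "line_thru X Y = {Q. inner Q y = 1}"
proof (intro set_eqI iffI)
  fix Q
  assume "Q \<in> line_thru X Y"
  with assms(2,3) show "Q \<in> {Q. inner Q y = 1}"
    by (auto simp: line_thru_def inner_add_left inner_diff_left)
next
  fix Q
  assume "Q \<in> {Q. inner Q y = 1}"
  then have "cross (Q - X) (Y - X) = 0"
    using inner_minus_one_mult_cross[of y X Y Q] assms(2,3) by (simp add: inner_commute)
  then have "Q - X = (inner (Q - X) (Y - X) / inner (Y - X) (Y - X)) *\<^sub>R (Y - X)"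
    using assms(1) by (intro cross_eq_0_imp_multiple) auto
  then have "Q = X + (inner (Q - X) (Y - X) / inner (Y - X) (Y - X)) *\<^sub>R (Y - X)"
    by (simp add: diff_eq_eq add.commute)
  then show "Q \<in> line_thru X Y"
    unfolding line_thru_def by blast
qed

lemma line_thru_param:
  assumes "Q \<in> line_thru P Q0"
  obtains a where "Q = Q0 + a *\<^sub>R (Q0 - P)"
proof -
  obtain t where "Q = P + t *\<^sub>R (Q0 - P)"
    using assms unfolding line_thru_def by blast
  then have "Q = Q0 + (t - 1) *\<^sub>R (Q0 - P)"
    by (simp add: algebra_simps)
  then show ?thesis
    by (rule that)
qed

lemma region_same_side:
  assumes "\<Delta> \<in> regions S" "Q \<in> S" "x \<in> \<Delta>" "z \<in> \<Delta>"
  shows "0 \<le> (inner Q x - 1) * (inner Q z - 1)"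
proof -
  obtain C where C: "C \<in> components (UNIV - (\<Union>P\<in>S. Lline P))" "\<Delta> = closure C"
    using assms(1) unfolding regions_def by blast
  have "inner Q y \<noteq> 1" if "y \<in> C" for y
    using in_components_subset[OF C(1)] that assms(2) by (auto simp: Lline_iff_inner)
  then have "C \<subseteq> {y. inner Q y \<le> 1} \<or> C \<subseteq> {y. inner Q y \<ge> 1}"
    using connected_ivt_hyperplane[OF in_components_connected[OF C(1)], of _ _ Q 1]
    by (metis linorder_le_cases mem_Collect_eq subsetI)
  then have "\<Delta> \<subseteq> {y. inner Q y \<le> 1} \<or> \<Delta> \<subseteq> {y. inner Q y \<ge> 1}"
    unfolding C(2)
    using closure_minimal[OF _ closed_halfspace_le] closure_minimal[OF _ closed_halfspace_ge] by blast
  then show ?thesis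
  proof
    assume "\<Delta> \<subseteq> {y. inner Q y \<le> 1}"
    then have "inner Q x - 1 \<le> 0" "inner Q z - 1 \<le> 0"
      using assms(3,4) by auto
    then show ?thesis
      by (rule mult_nonpos_nonpos)
  next
    assume "\<Delta> \<subseteq> {y. inner Q y \<ge> 1}"
    then have "inner Q x - 1 \<ge> 0" "inner Q z - 1 \<ge> 0"
      using assms(3,4) by auto
    then show ?thesis
      by (rule mult_nonneg_nonneg)
  qed
qed

lemma same_side_segment_hit:
  assumes "0 \<le> (inner Q x - 1) * (inner Q z - 1)" "0 \<le> r" "r < 1"
    and "inner Q (x + r *\<^sub>R (z - x)) = 1"
  shows "inner Q x = 1"
proof (rule ccontr)
  assume ne: "inner Q x \<noteq> 1"
  have "(1 - r) * (inner Q x - 1) + r * (inner Q z - 1) = 0"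
    using assms(4) by (simp add: inner_add_right inner_diff_right algebra_simps)
  then have "((1 - r) * (inner Q x - 1) + r * (inner Q z - 1)) * (inner Q x - 1) = 0"
    by simp
  then have "(1 - r) * (inner Q x - 1)\<^sup>2 + r * ((inner Q x - 1) * (inner Q z - 1)) = 0"
    by (simp add: algebra_simps power2_eq_square)
  moreover have "0 < (1 - r) * (inner Q x - 1)\<^sup>2"
    using ne assms(3) by simp
  moreover have "0 \<le> r * ((inner Q x - 1) * (inner Q z - 1))"
    using assms(1,2) by simp
  ultimately show False
    by linarith
qed

lemma cyc_before_iff:
  assumes "P \<noteq> Q0"
  shows "cyc_before P Q0 (Q0 + a *\<^sub>R (Q0 - P)) (Q0 + b *\<^sub>R (Q0 - P)) \<longleftrightarrow>
    a \<noteq> 0 \<and> b \<noteq> 0 \<and> 1 / b < 1 / a"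
proof -
  have "Q0 - P \<noteq> 0"
    using assms by simp
  then have "cyc_before P Q0 (Q0 + a *\<^sub>R (Q0 - P)) (Q0 + b *\<^sub>R (Q0 - P)) \<longleftrightarrow>
      a \<noteq> 0 \<and> b \<noteq> 0 \<and> ((0 < a \<and> b < 0) \<or> (0 < a * b \<and> a < b))"
    unfolding cyc_before_def by (auto simp: scaleR_cancel_right)
  also have "\<dots> \<longleftrightarrow> a \<noteq> 0 \<and> b \<noteq> 0 \<and> 1 / b < 1 / a"
    by (auto simp: zero_less_mult_iff divide_simps)
  finally show ?thesis .
qed

lemma nonneg_mult_sign_transfer:
  fixes x y z :: real
  assumes "0 \<le> x * y" "0 < y * z"
  shows "0 \<le> x * z"
proof -
  have "y \<noteq> 0"
    using assms(2) by auto
  have "0 \<le> (x * y) * (y * z)"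
    using mult_nonneg_nonneg[OF assms(1) less_imp_le[OF assms(2)]] .
  also have "\<dots> = (x * z) * y\<^sup>2"
    by (simp add: power2_eq_square mult_ac)
  finally show ?thesis
    using \<open>y \<noteq> 0\<close> by (simp add: zero_le_mult_iff)
qed

lemma pencil_sign:
  assumes "inner P x = 1" "inner (P + b *\<^sub>R W) y = 1" "a \<noteq> 0" "b \<noteq> 0"
    and "0 \<le> (inner (P + a *\<^sub>R W) x - 1) * (inner (P + a *\<^sub>R W) y - 1)"
  shows "0 \<le> (1 / a - 1 / b) * (inner W x * (inner P y - 1))"
proof -
  have fx: "inner (P + a *\<^sub>R W) x - 1 = a * inner W x"
    using assms(1) by (simp add: inner_add_left)
  have "inner (P + a *\<^sub>R W) y - 1 = inner P y - 1 + a / b * (b * inner W y)"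
    using assms(4) by (simp add: inner_add_left)
  also have "b * inner W y = 1 - inner P y"
    using assms(2) by (simp add: inner_add_left algebra_simps)
  finally have fy: "inner (P + a *\<^sub>R W) y - 1 = (inner P y - 1) * (1 - a / b)"
    by (simp add: algebra_simps)
  have "(inner (P + a *\<^sub>R W) x - 1) * (inner (P + a *\<^sub>R W) y - 1) =
      (a * (1 - a / b)) * (inner W x * (inner P y - 1))"
    unfolding fx fy by (simp add: mult_ac)
  also have "a * (1 - a / b) = a\<^sup>2 * (1 / a - 1 / b)"
    using assms(3) by (simp add: field_simps power2_eq_square)
  finally show ?thesis
    using assms(3,5) by (simp add: zero_le_mult_iff mult.assoc)
qed

lemma periodic_mod:
  fixes f :: "nat \<Rightarrow> 'a"
  assumes "\<forall>j. f (j + n) = f j"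
  shows "f (j mod n) = f j"
proof -
  have "f (i + m * n) = f i" for i m
  proof (induction m)
    case (Suc m)
    have "f (i + Suc m * n) = f ((i + m * n) + n)"
      by (simp add: algebra_simps)
    with Suc assms show ?case
      by simp
  qed simp
  from this[of "j mod n" "j div n"] show ?thesis
    by (simp add: mod_div_mult_eq)
qed

definition sweep_hits ::
  "(real \<times> real) set \<Rightarrow> real \<times> real \<Rightarrow> real \<times> real \<Rightarrow> real \<times> real \<Rightarrow> real \<Rightarrow> bool" where
  "sweep_hits S P0 P1 d t \<longleftrightarrow> (\<exists>Q\<in>S. Q \<in> line_thru (P0 + t *\<^sub>R d) P1 \<and> Q \<notin> line_thru P0 P1)"

text \<open>v0, ..., v3 are consecutive vertices v_k, ..., v_{k+3}, the side from v_j to v_{j+1}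
  lying on L_{P_j}; d = \<sigma> P1 is the direction of motion along M.\<close>
locale sweep_corner =
  fixes S \<Delta> :: "(real \<times> real) set" and v0 v1 v2 v3 P0 P1 P2 d :: "real \<times> real"
    and \<sigma> :: real
  assumes P0_v0: "inner P0 v0 = 1" and P0_v1: "inner P0 v1 = 1"
    and P1_v1: "inner P1 v1 = 1" and P1_v2: "inner P1 v2 = 1"
    and P2_v2: "inner P2 v2 = 1" and P2_v3: "inner P2 v3 = 1"
    and P2_in_S: "P2 \<in> S"
    and turn0: "cross (v1 - v0) (v2 - v1) < 0"
    and turn1: "cross (v2 - v1) (v3 - v2) < 0"
    and vertices: "v1 \<in> \<Delta>" "v2 \<in> \<Delta>" "v3 \<in> \<Delta>"
    and same_side: "\<And>Q x z. Q \<in> S \<Longrightarrow> x \<in> \<Delta> \<Longrightarrow> z \<in> \<Delta> \<Longrightarrow> 0 \<le> (inner Q x - 1) * (inner Q z - 1)"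
    and sigma_cases: "\<sigma> = 1 \<or> \<sigma> = -1" and d_eq: "d = \<sigma> *\<^sub>R P1"
    and direction: "if origin_side v1 v2 = Rgt then right_of P0 (P0 + d) else left_of P0 (P0 + d)"
begin

definition t_star :: real where
  "t_star = \<sigma> * cross P0 P1 * cross v1 v2"

lemma turn0_eq: "cross (v1 - v0) (v2 - v1) = cross P0 P1 * cross v0 v1 * cross v1 v2"
  using P0_v0 P0_v1 P1_v1 P1_v2 by (rule turn_eq_cross_duals)

lemma t_star_pos: "0 < t_star"
proof -
  have "cross v1 v2 \<noteq> 0"
    using turn0 turn0_eq by auto
  moreover have "cross P0 (P0 + d) = \<sigma> * cross P0 P1"
    by (simp add: d_eq cross_def algebra_simps)
  ultimately consider "0 < cross v1 v2" "0 < \<sigma> * cross P0 P1"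
    | "cross v1 v2 < 0" "\<sigma> * cross P0 P1 < 0"
    using direction unfolding origin_side_eq left_of_def right_of_def
    by (cases "0 < cross v1 v2") auto
  then show ?thesis
    unfolding t_star_def by cases (simp_all add: mult_neg_neg)
qed

lemma sigma_cross_v0_v1_neg: "\<sigma> * cross v0 v1 < 0"
proof -
  have "t_star * cross (v1 - v0) (v2 - v1) = \<sigma> * cross v0 v1 * (cross P0 P1 * cross v1 v2)\<^sup>2"
    unfolding t_star_def turn0_eq by (simp add: power2_eq_square mult_ac)
  moreover have "t_star * cross (v1 - v0) (v2 - v1) < 0"
    using t_star_pos turn0 by (rule mult_pos_neg)
  ultimately show ?thesis
    by (simp add: mult_less_0_iff)
qed

lemma sweep_point_ne_P1: "P0 + t *\<^sub>R d \<noteq> P1"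
proof
  assume eq: "P0 + t *\<^sub>R d = P1"
  then have "inner (P0 + t *\<^sub>R d) v1 = inner P1 v1"
    by simp
  then have "1 + t * \<sigma> = 1"
    using P0_v1 P1_v1 by (simp add: d_eq inner_add_left)
  then have "t = 0"
    using sigma_cases by auto
  then have "P0 = P1"
    using eq by simp
  then show False
    using t_star_pos unfolding t_star_def by (simp add: cross_def)
qed

lemma sweep_line: "line_thru (P0 + t *\<^sub>R d) P1 = {Q. inner Q (v1 + (t / t_star) *\<^sub>R (v2 - v1)) = 1}"
proof (rule line_thru_eq_dual_line[OF sweep_point_ne_P1])
  have "cross v1 v2 * cross P0 P1 = \<sigma> * t_star"
    using sigma_cases by (auto simp: t_star_def)
  then have "inner P0 (v2 - v1) = - \<sigma> * t_star"
    using inner_diff_eq_cross[OF P1_v1 P1_v2, of P0] by simp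
  then show "inner (P0 + t *\<^sub>R d) (v1 + (t / t_star) *\<^sub>R (v2 - v1)) = 1"
    using t_star_pos P0_v1 P1_v1 P1_v2
    by (simp add: d_eq inner_add_left inner_add_right inner_diff_right)
  show "inner P1 (v1 + (t / t_star) *\<^sub>R (v2 - v1)) = 1"
    using P1_v1 P1_v2 by (simp add: inner_add_right inner_diff_right)
qed

lemma sweep_line_start: "line_thru P0 P1 = {Q. inner Q v1 = 1}"
  using sweep_line[of 0] by simp

lemma P2_not_through_v1: "inner P2 v1 \<noteq> 1"
proof
  assume "inner P2 v1 = 1"
  then have "cross (v1 - v2) (v3 - v2) = 0"
    using inner_minus_one_mult_cross[OF P2_v2 P2_v3, of v1] by simp
  moreover have "cross (v1 - v2) (v3 - v2) = - cross (v2 - v1) (v3 - v2)"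
    by (simp add: cross_def algebra_simps)
  ultimately show False
    using turn1 by simp
qed

lemma first_sweep_hit:
  "(0 \<le> t \<and> sweep_hits S P0 P1 d t \<and> (\<forall>s. 0 \<le> s \<and> s < t \<longrightarrow> \<not> sweep_hits S P0 P1 d s))
    \<longleftrightarrow> t = t_star"
proof -
  have hits_iff: "sweep_hits S P0 P1 d s \<longleftrightarrow>
      (\<exists>Q\<in>S. inner Q (v1 + (s / t_star) *\<^sub>R (v2 - v1)) = 1 \<and> inner Q v1 \<noteq> 1)" for s
    unfolding sweep_hits_def sweep_line sweep_line_start by simp
  have before: "\<not> sweep_hits S P0 P1 d s" if "0 \<le> s" "s < t_star" for s
    using same_side_segment_hit[OF same_side[OF _ vertices(1,2)], of _ "s / t_star"] that t_star_pos
    unfolding hits_iff by auto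
  have "sweep_hits S P0 P1 d t_star"
    unfolding hits_iff using P2_in_S P2_v2 P2_not_through_v1 t_star_pos by auto
  show ?thesis
  proof
    assume first: "0 \<le> t \<and> sweep_hits S P0 P1 d t \<and> (\<forall>s. 0 \<le> s \<and> s < t \<longrightarrow> \<not> sweep_hits S P0 P1 d s)"
    show "t = t_star"
    proof (rule ccontr)
      assume "t \<noteq> t_star"
      then consider "t < t_star" | "t_star < t"
        by linarith
      then show False
        using first before \<open>sweep_hits S P0 P1 d t_star\<close> t_star_pos by cases auto
    qed
  qed (use before \<open>sweep_hits S P0 P1 d t_star\<close> t_star_pos in auto)
qed

definition P_star :: "real \<times> real" where
  "P_star = P0 + t_star *\<^sub>R d"

lemma P_star_ne_P1: "P_star \<noteq> P1"
  unfolding P_star_def by (rule sweep_point_ne_P1)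

lemma final_line: "line_thru P_star P1 = {Q. inner Q v2 = 1}"
  using sweep_line[of t_star] t_star_pos by (simp add: P_star_def)

lemma P2_on_final_line: "P2 \<in> line_thru P_star P1 \<inter> S - {P1}"
  using P2_in_S P2_v2 P2_not_through_v1 P1_v1 unfolding final_line by auto

lemma turning_sign:
  "0 < (inner (P1 - P_star) v1 * (inner P1 v3 - 1)) * (cross v0 v1 * cross v1 v2)"
proof -
  have "inner (P1 - P_star) v1 = - (\<sigma> * t_star)"
    unfolding P_star_def using P0_v1 P1_v1 by (simp add: d_eq inner_add_left inner_diff_left)
  then have "(inner (P1 - P_star) v1 * (inner P1 v3 - 1)) * (cross v0 v1 * cross v1 v2) =
      t_star * (- (\<sigma> * cross v0 v1)) * ((inner P1 v3 - 1) * cross v1 v2)"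
    by (simp add: mult_ac)
  also have "(inner P1 v3 - 1) * cross v1 v2 = - cross (v2 - v1) (v3 - v2)"
    using inner_minus_one_mult_cross[OF P1_v1 P1_v2, of v3] by (simp add: cross_def algebra_simps)
  finally have eq: "(inner (P1 - P_star) v1 * (inner P1 v3 - 1)) * (cross v0 v1 * cross v1 v2) =
      t_star * (- (\<sigma> * cross v0 v1)) * (- cross (v2 - v1) (v3 - v2))" .
  show ?thesis
    unfolding eq using t_star_pos sigma_cross_v0_v1_neg turn1 by (intro mult_pos_pos) auto
qed

lemma final_line_position:
  assumes "Q \<in> S" "Q = P1 + a *\<^sub>R (P1 - P_star)" "P2 = P1 + a2 *\<^sub>R (P1 - P_star)"
    and "a \<noteq> 0" "a2 \<noteq> 0"
  shows "0 \<le> (1 / a - 1 / a2) * (cross v0 v1 * cross v1 v2)"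
proof -
  have "0 \<le> (1 / a - 1 / a2) * (inner (P1 - P_star) v1 * (inner P1 v3 - 1))"
    using pencil_sign[OF P1_v1 _ assms(4,5)] same_side[OF assms(1) vertices(1,3)] P2_v3 assms(2,3)
    by simp
  from this turning_sign show ?thesis
    by (rule nonneg_mult_sign_transfer)
qed

lemma next_side_order:
  "if origin_side v0 v1 = origin_side v1 v2
   then \<forall>Q\<in>line_thru P_star P1 \<inter> S - {P1}. \<not> cyc_before P_star P1 P2 Q
   else \<forall>Q\<in>line_thru P_star P1 \<inter> S - {P1}. \<not> cyc_before P_star P1 Q P2"
proof -
  define c where "c = cross v0 v1 * cross v1 v2"
  have "P2 \<in> line_thru P_star P1" "P2 \<noteq> P1"
    using P2_on_final_line by auto
  then obtain a2 where a2: "P2 = P1 + a2 *\<^sub>R (P1 - P_star)" "a2 \<noteq> 0"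
    by (metis line_thru_param add_0_right scale_zero_left)
  have "cross v0 v1 \<noteq> 0" "cross v1 v2 \<noteq> 0"
    using sigma_cross_v0_v1_neg t_star_pos by (auto simp: t_star_def)
  then have "c \<noteq> 0" and same_iff: "origin_side v0 v1 = origin_side v1 v2 \<longleftrightarrow> 0 < c"
    by (auto simp: c_def origin_side_eq zero_less_mult_iff)
  have "if 0 < c then \<not> cyc_before P_star P1 P2 Q else \<not> cyc_before P_star P1 Q P2"
    if Q: "Q \<in> line_thru P_star P1 \<inter> S - {P1}" for Q
  proof -
    obtain a where a: "Q = P1 + a *\<^sub>R (P1 - P_star)"
      using line_thru_param Q by blast
    with Q have "a \<noteq> 0"
      by auto
    then have "0 \<le> (1 / a - 1 / a2) * c"
      unfolding c_def using final_line_position[OF _ a a2(1) _ a2(2)] Q by blast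
    then have "if 0 < c then 1 / a2 \<le> 1 / a else 1 / a \<le> 1 / a2"
      using \<open>c \<noteq> 0\<close> by (auto simp: zero_le_mult_iff)
    then show ?thesis
      unfolding a a2(1) cyc_before_iff[OF P_star_ne_P1] by (simp split: if_splits)
  qed
  then show ?thesis
    unfolding same_iff by auto
qed

end

theorem theorem3p13:
  fixes S \<Delta> :: "(real \<times> real) set" and n k :: nat and v p :: "nat \<Rightarrow> real \<times> real"
  assumes "finite S" and "(0, 0) \<notin> S"
    and "\<Delta> \<in> regions S" and "bounded \<Delta>"
    and "n \<ge> 3"
    and "\<forall>j. v (j + n) = v j"
    and "inj_on v {..<n}"
    and "\<Delta> = convex hull (v ` {..<n})"
    and "\<forall>j. p j \<in> S \<and> v j \<in> Lline (p j) \<and> v (Suc j) \<in> Lline (p j)"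
    and "\<forall>j. \<forall>x\<in>\<Delta>. cross (v (Suc j) - v j) (x - v j) \<le> 0"
    and "\<forall>j. cross (v (Suc j) - v j) (v (Suc (Suc j)) - v (Suc j)) < 0"
  shows
    "let D = (\<lambda>j. origin_side (v j) (v (Suc j)));
         P0 = p k; P1 = p (k + 1)
     in \<forall>d. (d = P1 \<or> d = - P1) \<and>
            (if D (k + 1) = Rgt then right_of P0 (P0 + d) else left_of P0 (P0 + d))
          \<longrightarrow>
          (let hit = (\<lambda>t. \<exists>Q\<in>S. Q \<in> line_thru (P0 + t *\<^sub>R d) P1 \<and> Q \<notin> line_thru P0 P1);
               first = (\<lambda>t. 0 \<le> t \<and> hit t \<and> (\<forall>s. 0 \<le> s \<and> s < t \<longrightarrow> \<not> hit s))
           in (\<exists>t. first t) \<and>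
              (\<forall>t. first t \<longrightarrow>
                 (let Pst = P0 + t *\<^sub>R d;
                      Qs = (line_thru Pst P1 \<inter> S) - {P1}
                  in p (k + 2) \<in> Qs \<and>
                     (if D k = D (k + 1)
                      then (\<forall>Q\<in>Qs. \<not> cyc_before Pst P1 (p (k + 2)) Q)
                      else (\<forall>Q\<in>Qs. \<not> cyc_before Pst P1 Q (p (k + 2)))))))"
proof -
  have vertex_in_region: "v j \<in> \<Delta>" for j
  proof -
    have "v j = v (j mod n)"
      using periodic_mod[OF assms(6)] by simp
    then show ?thesis
      using assms(5,8) hull_subset[of "v ` {..<n}" convex] by auto
  qed
  have sides: "p j \<in> S" "inner (p j) (v j) = 1" "inner (p j) (v (Suc j)) = 1" for j
    using assms(9) by (simp_all add: Lline_iff_inner)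
  have k_plus: "k + 1 = Suc k" "k + 2 = Suc (Suc k)"
    by simp_all
  show ?thesis
    unfolding Let_def k_plus sweep_hits_def[symmetric]
    apply (intro allI impI)
    subgoal premises d for d
    proof -
      obtain \<sigma> where \<sigma>: "\<sigma> = 1 \<or> \<sigma> = -1" "d = \<sigma> *\<^sub>R p (Suc k)"
        using d by (metis scaleR_one scaleR_minus1_left)
      interpret sweep_corner S \<Delta> "v k" "v (Suc k)" "v (Suc (Suc k))" "v (Suc (Suc (Suc k)))"
        "p k" "p (Suc k)" "p (Suc (Suc k))" d \<sigma>
        using \<sigma> d[THEN conjunct2] sides assms(11) vertex_in_region region_same_side[OF assms(3)]
        by unfold_locales auto
      show ?thesis
        using first_sweep_hit P2_on_final_line next_side_order unfolding P_star_def by auto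
    qed
    done
qed

end
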